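(* Let $c,o$ be vertices with a directed path from $c$ to $o$, and put $\delta=\delta_{co}$. Assume that the polynomials $b(s)q(s)$ and $a(s)p(s)$ have no common root. If $s_0$ is a root of $b(s)q(s)$ of multiplicity $m$, then $s_0$ is a zero of the rational function $T_{co}(s)$ of multiplicity exactly $(\delta+1)m$.
   Context: $\mathcal G$ is a weighted directed graph on $\{1,\dots,N\}$ with adjacency matrix $A=[a_{ij}]$. Here $a_{ij}>0$ if there is an arc from $j$ to $i$ and $a_{ij}=0$ otherwise (no self-loops). The Laplacian is $L=D-A$ with $D=\mathrm{diag}(\sum_j a_{ij})$. A directed path from $u$ to $w$ is a sequence of distinct vertices $u=v_0,\dots,v_\ell=w$ with an arc from $v_k$ to $v_{k+1}$ for each $k$, and $\ell$ is its length. $\delta_{uw}$ is the length of a shortest directed path from $u$ to $w$. $e_i$ is the $i$-th canonical basis vector. Let $a,b,p,q$ be nonzero real polynomials and $M(s)=\frac{b(s)q(s)}{a(s)p(s)}$. The network is $y=M(s)[-Ly+r]$. $T_{co}(s)=e_o^T(I+M(s)L)^{-1}M(s)e_c$ is the transfer function from $r_c$ to $y_o$ with all other inputs zero. *)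

theory Defs
  imports "HOL-Computational_Algebra.Fraction_Field" "HOL-Computational_Algebra.Polynomial"
    "Jordan_Normal_Form.Matrix"
begin

text \<open>Vertices are 0..<N (0-based instead of 1..N). A is the weighted adjacency matrix:
  A(i,j) > 0 iff there is an arc from j to i.\<close>

definition weighted_digraph :: "nat \<Rightarrow> real mat \<Rightarrow> bool" where
  "weighted_digraph N A \<longleftrightarrow> A \<in> carrier_mat N N \<and>
     (\<forall>i<N. \<forall>j<N. A $$ (i,j) \<ge> 0) \<and> (\<forall>i<N. A $$ (i,i) = 0)"

definition arc :: "real mat \<Rightarrow> nat \<Rightarrow> nat \<Rightarrow> bool" where
  "arc A j i \<longleftrightarrow> A $$ (i,j) > 0"

text \<open>A directed path from u to w, as the list of its distinct vertices v0,...,vl; its length is l.\<close>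
definition is_dpath :: "nat \<Rightarrow> real mat \<Rightarrow> nat \<Rightarrow> nat \<Rightarrow> nat list \<Rightarrow> bool" where
  "is_dpath N A u w vs \<longleftrightarrow> vs \<noteq> [] \<and> distinct vs \<and> set vs \<subseteq> {..<N} \<and>
     hd vs = u \<and> last vs = w \<and> (\<forall>k. k + 1 < length vs \<longrightarrow> arc A (vs ! k) (vs ! (k+1)))"

definition has_dpath :: "nat \<Rightarrow> real mat \<Rightarrow> nat \<Rightarrow> nat \<Rightarrow> bool" where
  "has_dpath N A u w \<longleftrightarrow> (\<exists>vs. is_dpath N A u w vs)"

definition dpath_dist :: "nat \<Rightarrow> real mat \<Rightarrow> nat \<Rightarrow> nat \<Rightarrow> nat" where
  "dpath_dist N A u w = (LEAST l. \<exists>vs. is_dpath N A u w vs \<and> length vs = l + 1)"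

definition laplacian :: "nat \<Rightarrow> real mat \<Rightarrow> real mat" where
  "laplacian N A = mat N N (\<lambda>(i,j). (if i = j then (\<Sum>k<N. A $$ (i,k)) else 0) - A $$ (i,j))"

text \<open>Rational functions: the fraction field of complex polynomials (real polynomials embedded).\<close>
type_synonym rfun = "complex poly fract"

definition cpoly :: "real poly \<Rightarrow> complex poly" where
  "cpoly f = map_poly complex_of_real f"

definition const_rf :: "real \<Rightarrow> rfun" where
  "const_rf x = Fraction_Field.Fract [:complex_of_real x:] 1"

definition Mfun :: "real poly \<Rightarrow> real poly \<Rightarrow> real poly \<Rightarrow> real poly \<Rightarrow> rfun" where
  "Mfun a b p q = Fraction_Field.Fract (cpoly (b * q)) (cpoly (a * p))"

definition mat_inv :: "'a::field mat \<Rightarrow> 'a mat" where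
  "mat_inv K = (SOME B. inverts_mat K B \<and> inverts_mat B K)"

definition transfer_fun ::
  "nat \<Rightarrow> real mat \<Rightarrow> real poly \<Rightarrow> real poly \<Rightarrow> real poly \<Rightarrow> real poly \<Rightarrow> nat \<Rightarrow> nat \<Rightarrow> rfun" where
  "transfer_fun N A a b p q c ob =
    (let M = Mfun a b p q;
         Lr = map_mat const_rf (laplacian N A);
         K = 1\<^sub>m N + M \<cdot>\<^sub>m Lr
     in (mat_inv K * (M \<cdot>\<^sub>m 1\<^sub>m N)) $$ (ob, c))"

text \<open>r has a zero of multiplicity exactly k at z: r = n/d with n, d nonzero and
  order z n - order z d = k (independent of the representation).\<close>
definition zero_mult :: "rfun \<Rightarrow> complex \<Rightarrow> int \<Rightarrow> bool" where
  "zero_mult r z k \<longleftrightarrow> (\<exists>n d. n \<noteq> 0 \<and> d \<noteq> 0 \<and> r = Fraction_Field.Fract n d \<and>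
      int (order z n) - int (order z d) = k)"

end

theory Submission
  imports Defs "Jordan_Normal_Form.Determinant"
begin

(* Write M = P/Q with P = b q and Q = a p. Clearing denominators, I + M L = K/Q for the
   polynomial matrix K = Q I + P L, hence T_co = P adj(K)_oc / det K, and det K(s0) = Q(s0)^N,
   which is nonzero. The truncated Neumann series S = sum_{k <= delta} Q^(delta-k) (-P)^k L^k
   satisfies S K = Q^(delta+1) I - (-P)^(delta+1) L^(delta+1). Since (L^k)_oc = 0 for k < delta
   while (-1)^delta (L^delta)_oc > 0 (only shortest paths contribute to (L^delta)_oc, all with the
   sign (-1)^delta of the off-diagonal entries -a_ij), multiplying by adj K gives
   Q^(delta+1) adj(K)_oc = (-P)^delta R with R(s0) nonzero. So adj(K)_oc vanishes to order
   delta m at s0, and T_co to order (delta+1) m. *)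

definition dpath_within :: "nat \<Rightarrow> real mat \<Rightarrow> nat \<Rightarrow> nat \<Rightarrow> nat \<Rightarrow> bool" where
  "dpath_within N A k u w \<longleftrightarrow> (\<exists>vs. is_dpath N A u w vs \<and> length vs \<le> Suc k)"

lemma dpath_within_Suc: "dpath_within N A k u w \<Longrightarrow> dpath_within N A (Suc k) u w"
  unfolding dpath_within_def using le_SucI by blast

lemma dpath_within_0_iff: "w < N \<Longrightarrow> dpath_within N A 0 u w \<longleftrightarrow> u = w"
proof
  assume "dpath_within N A 0 u w"
  then obtain vs where "is_dpath N A u w vs" "length vs \<le> 1"
    unfolding dpath_within_def by auto
  then show "u = w" unfolding is_dpath_def by (cases vs) auto
next
  assume "w < N" "u = w"
  then have "is_dpath N A u w [w]" unfolding is_dpath_def by auto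
  then show "dpath_within N A 0 u w" unfolding dpath_within_def by fastforce
qed

lemma is_dpath_drop:
  assumes "is_dpath N A u w vs" and "k < length vs"
  shows "is_dpath N A (vs ! k) w (drop k vs)"
  using assms unfolding is_dpath_def
  by (auto simp: hd_drop_conv_nth dest: in_set_dropD)

lemma dpath_within_arc:
  assumes within: "dpath_within N A k v w" and arc: "arc A u v" and u: "u < N"
  shows "dpath_within N A (Suc k) u w"
proof -
  obtain vs where vs: "is_dpath N A v w vs" "length vs \<le> Suc k"
    using within unfolding dpath_within_def by blast
  show ?thesis
  proof (cases "u \<in> set vs")
    case True
    then obtain i where i: "i < length vs" "vs ! i = u" by (meson in_set_conv_nth)
    have "is_dpath N A u w (drop i vs)" using is_dpath_drop[OF vs(1) i(1)] i(2) by simp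
    then show ?thesis unfolding dpath_within_def using vs(2) by fastforce
  next
    case False
    have "is_dpath N A u w (u # vs)"
      using vs(1) False u arc unfolding is_dpath_def
      by (auto simp: nth_Cons hd_conv_nth split: nat.split)
    then show ?thesis unfolding dpath_within_def using vs(2) by fastforce
  qed
qed

lemma dpath_within_Suc_cases:
  assumes within: "dpath_within N A (Suc k) u w" and not_within: "\<not> dpath_within N A k u w"
  obtains v where "v < N" "v \<noteq> u" "arc A u v" "dpath_within N A k v w"
proof -
  obtain vs where vs: "is_dpath N A u w vs" "length vs = Suc (Suc k)"
    using within not_within unfolding dpath_within_def by (meson le_SucE)
  have "is_dpath N A (vs ! 1) w (drop 1 vs)" using is_dpath_drop[OF vs(1)] vs(2) by simp
  then have "dpath_within N A k (vs ! 1) w" unfolding dpath_within_def using vs(2) by fastforce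
  moreover obtain y ys where "vs = u # y # ys"
    using vs unfolding is_dpath_def by (cases vs; cases "tl vs") auto
  then have "vs ! 1 < N" "vs ! 1 \<noteq> u" "arc A u (vs ! 1)"
    using vs(1) unfolding is_dpath_def by (auto dest: spec[of _ 0])
  ultimately show thesis using that by blast
qed

lemma dim_laplacian [simp]:
  "dim_row (laplacian N A) = N" "dim_col (laplacian N A) = N"
  unfolding laplacian_def by simp_all

lemma laplacian_carrier [simp]: "laplacian N A \<in> carrier_mat N N"
  by (simp add: carrier_matI)

lemma laplacian_off_diag:
  "i < N \<Longrightarrow> j < N \<Longrightarrow> i \<noteq> j \<Longrightarrow> laplacian N A $$ (i, j) = - A $$ (i, j)"
  unfolding laplacian_def by simp

lemma pow_mat_Suc_index:
  assumes "(X :: 'a :: comm_semiring_1 mat) \<in> carrier_mat N N" and "i < N" and "j < N"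
  shows "(X ^\<^sub>m Suc k) $$ (i, j) = (\<Sum>l<N. (X ^\<^sub>m k) $$ (i, l) * X $$ (l, j))"
  using assms pow_carrier_mat[OF assms(1), of k]
  by (simp add: scalar_prod_def atLeast0LessThan)

lemma weighted_digraph_entry_eq_0:
  "weighted_digraph N A \<Longrightarrow> i < N \<Longrightarrow> j < N \<Longrightarrow> \<not> arc A j i \<Longrightarrow> A $$ (i, j) = 0"
  unfolding weighted_digraph_def arc_def by force

lemma laplacian_pow_eq_0:
  assumes G: "weighted_digraph N A" and w: "w < N" and u: "u < N"
    and not_within: "\<not> dpath_within N A k u w"
  shows "(laplacian N A ^\<^sub>m k) $$ (w, u) = 0"
  using u not_within
proof (induction k arbitrary: u)
  case 0
  then show ?case using w dpath_within_0_iff[OF w] by auto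
next
  case (Suc k)
  let ?L = "laplacian N A"
  have "(?L ^\<^sub>m k) $$ (w, v) * ?L $$ (v, u) = 0" if v: "v < N" for v
  proof (cases "v = u")
    case True
    then show ?thesis using Suc dpath_within_Suc by (metis mult_eq_0_iff)
  next
    case False
    show ?thesis
    proof (cases "arc A u v")
      case True
      then show ?thesis using Suc v dpath_within_arc by (metis mult_eq_0_iff)
    next
      case False
      then show ?thesis
        using weighted_digraph_entry_eq_0[OF G v Suc.prems(1)] laplacian_off_diag v Suc.prems(1)
          \<open>v \<noteq> u\<close>
        by simp
    qed
  qed
  then show ?case
    unfolding pow_mat_Suc_index[OF laplacian_carrier w Suc.prems(1)] by (intro sum.neutral) simp
qed

(* Off the diagonal L = -A <= 0, so every term of (L^k)_wu not killed by laplacian_pow_eq_0 has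
   sign (-1)^k, and the first arc of a shortest path contributes a nonzero one. *)
lemma laplacian_pow_sign:
  assumes G: "weighted_digraph N A" and w: "w < N" and u: "u < N"
    and within: "dpath_within N A k u w" and shortest: "\<forall>l<k. \<not> dpath_within N A l u w"
  shows "0 < (-1) ^ k * (laplacian N A ^\<^sub>m k) $$ (w, u)"
  using u within shortest
proof (induction k arbitrary: u)
  case 0
  then show ?case using w dpath_within_0_iff[OF w] by auto
next
  case (Suc k)
  let ?L = "laplacian N A"
  let ?f = "\<lambda>x. (-1) ^ Suc k * ((?L ^\<^sub>m k) $$ (w, x) * ?L $$ (x, u))"
  have not_within: "\<not> dpath_within N A k u w" using Suc.prems(3) by blast
  obtain v where v: "v < N" "v \<noteq> u" "arc A u v" "dpath_within N A k v w"
    using dpath_within_Suc_cases[OF Suc.prems(2) not_within] .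
  have shortest_from: "\<forall>l<k. \<not> dpath_within N A l x w" if "arc A u x" for x
    using Suc.prems(1,3) dpath_within_arc[OF _ that] by (metis Suc_mono)
  have off_diag: "?f x = A $$ (x, u) * ((-1) ^ k * (?L ^\<^sub>m k) $$ (w, x))" if "x < N" "x \<noteq> u" for x
    using laplacian_off_diag[OF that(1) Suc.prems(1) that(2)] by simp
  have nonneg: "0 \<le> ?f x" if x: "x < N" for x
  proof (cases "x \<noteq> u \<and> arc A u x \<and> dpath_within N A k x w")
    case True
    then have "?f x = A $$ (x, u) * ((-1) ^ k * (?L ^\<^sub>m k) $$ (w, x))" using off_diag[OF x] by blast
    then show ?thesis
      using True Suc.IH[OF x _ shortest_from] unfolding arc_def by (simp add: less_imp_le)
  next
    case False
    then consider "x = u" | "x \<noteq> u" "A $$ (x, u) = 0" | "\<not> dpath_within N A k x w"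
      using weighted_digraph_entry_eq_0[OF G x Suc.prems(1)] by blast
    then show ?thesis
      by cases (use off_diag[OF x] laplacian_pow_eq_0[OF G w] x Suc.prems(1) not_within in auto)
  qed
  have "0 < ?f v"
    using off_diag[OF v(1,2)] Suc.IH[OF v(1) v(4) shortest_from[OF v(3)]] v(3)
    unfolding arc_def by simp
  also have "?f v \<le> (\<Sum>x<N. ?f x)"
    by (rule member_le_sum) (use v(1) nonneg in auto)
  finally show ?case
    unfolding pow_mat_Suc_index[OF laplacian_carrier w Suc.prems(1)] sum_distrib_left .
qed

lemma dpath_within_dpath_dist:
  assumes "has_dpath N A u w"
  shows "dpath_within N A (dpath_dist N A u w) u w"
proof -
  obtain vs where "is_dpath N A u w vs" using assms unfolding has_dpath_def by blast
  then have "\<exists>l vs. is_dpath N A u w vs \<and> length vs = l + 1"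
    unfolding is_dpath_def by (metis Suc_eq_plus1 Suc_pred length_greater_0_conv)
  from LeastI_ex[OF this] show ?thesis
    unfolding dpath_dist_def dpath_within_def by fastforce
qed

lemma not_dpath_within_less_dpath_dist:
  assumes "k < dpath_dist N A u w"
  shows "\<not> dpath_within N A k u w"
proof
  assume "dpath_within N A k u w"
  then obtain vs where vs: "is_dpath N A u w vs" "length vs \<le> Suc k"
    unfolding dpath_within_def by blast
  then have "length vs = (length vs - 1) + 1" unfolding is_dpath_def by auto
  then have "dpath_dist N A u w \<le> length vs - 1"
    unfolding dpath_dist_def using vs(1) by (intro Least_le) blast
  then show False using vs(2) assms by simp
qed

lemma laplacian_pow_index_less_dpath_dist:
  assumes "weighted_digraph N A" and "c < N" and "ob < N" and "k < dpath_dist N A c ob"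
  shows "(laplacian N A ^\<^sub>m k) $$ (ob, c) = 0"
  using laplacian_pow_eq_0 not_dpath_within_less_dpath_dist assms by blast

lemma laplacian_pow_index_dpath_dist_neq_0:
  assumes "weighted_digraph N A" and "c < N" and "ob < N" and "has_dpath N A c ob"
  shows "(laplacian N A ^\<^sub>m dpath_dist N A c ob) $$ (ob, c) \<noteq> 0"
  using laplacian_pow_sign[OF assms(1,3,2) dpath_within_dpath_dist[OF assms(4)]]
    not_dpath_within_less_dpath_dist by fastforce

(* With M = P/Q, the network matrix I + M L is pencil N Q P L divided by Q. *)
definition pencil :: "nat \<Rightarrow> 'a :: comm_ring_1 \<Rightarrow> 'a \<Rightarrow> 'a mat \<Rightarrow> 'a mat" where
  "pencil N Q P X = Q \<cdot>\<^sub>m 1\<^sub>m N + P \<cdot>\<^sub>m X"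

(* The truncated Neumann series sum_{k<n} Q^(n-1-k) (-P)^k X^k for the inverse of
   pencil N Q P X. *)
primrec resolvent_sum :: "nat \<Rightarrow> 'a \<Rightarrow> 'a \<Rightarrow> 'a mat \<Rightarrow> nat \<Rightarrow> 'a :: comm_ring_1 mat" where
  "resolvent_sum N Q P X 0 = 0\<^sub>m N N"
| "resolvent_sum N Q P X (Suc n) = Q \<cdot>\<^sub>m resolvent_sum N Q P X n + (-P) ^ n \<cdot>\<^sub>m X ^\<^sub>m n"

lemma pencil_carrier [simp]: "X \<in> carrier_mat N N \<Longrightarrow> pencil N Q P X \<in> carrier_mat N N"
  unfolding pencil_def by simp

lemma resolvent_sum_carrier [simp]:
  "X \<in> carrier_mat N N \<Longrightarrow> resolvent_sum N Q P X n \<in> carrier_mat N N"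
  by (induction n) auto

lemma resolvent_sum_mult_pencil:
  assumes X: "X \<in> carrier_mat N N"
  shows "resolvent_sum N Q P X n * pencil N Q P X = Q ^ n \<cdot>\<^sub>m 1\<^sub>m N - (-P) ^ n \<cdot>\<^sub>m X ^\<^sub>m n"
proof (induction n)
  case 0
  show ?case using X left_mult_zero_mat[OF pencil_carrier[OF X]] by (intro eq_matI) auto
next
  case (Suc n)
  let ?K = "pencil N Q P X" and ?S = "resolvent_sum N Q P X n" and ?Xn = "X ^\<^sub>m n"
  have K: "?K \<in> carrier_mat N N" and S: "?S \<in> carrier_mat N N" using X by simp_all
  have Xn: "?Xn \<in> carrier_mat N N" and Xn1: "X ^\<^sub>m Suc n \<in> carrier_mat N N"
    using pow_carrier_mat[OF X] by blast+
  have "resolvent_sum N Q P X (Suc n) * ?K = Q \<cdot>\<^sub>m (?S * ?K) + (-P) ^ n \<cdot>\<^sub>m (?Xn * ?K)"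
    using S Xn K by (simp add: add_mult_distrib_mat[of _ N N] mult_smult_assoc_mat[of _ N N])
  also have "?Xn * ?K = ?Xn * (Q \<cdot>\<^sub>m 1\<^sub>m N) + ?Xn * (P \<cdot>\<^sub>m X)"
    unfolding pencil_def by (rule mult_add_distrib_mat[OF Xn]) (use X in auto)
  also have "\<dots> = Q \<cdot>\<^sub>m ?Xn + P \<cdot>\<^sub>m X ^\<^sub>m Suc n"
    using mult_smult_distrib[OF Xn one_carrier_mat] mult_smult_distrib[OF Xn X] right_mult_one_mat[OF Xn]
    by simp
  also have "Q \<cdot>\<^sub>m (?S * ?K) + (-P) ^ n \<cdot>\<^sub>m (Q \<cdot>\<^sub>m ?Xn + P \<cdot>\<^sub>m X ^\<^sub>m Suc n)
      = Q ^ Suc n \<cdot>\<^sub>m 1\<^sub>m N - (-P) ^ Suc n \<cdot>\<^sub>m X ^\<^sub>m Suc n"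
    unfolding Suc.IH using carrier_matD[OF X] carrier_matD[OF Xn] carrier_matD[OF Xn1]
    by (intro eq_matI) (auto simp: algebra_simps)
  finally show ?case .
qed

lemma resolvent_sum_index_first_nonzero:
  assumes X: "X \<in> carrier_mat N N" and i: "i < N" and j: "j < N"
    and below: "\<And>k. k < d \<Longrightarrow> (X ^\<^sub>m k) $$ (i, j) = 0"
  shows "resolvent_sum N Q P X (Suc d) $$ (i, j) = (-P) ^ d * (X ^\<^sub>m d) $$ (i, j)"
proof -
  have "resolvent_sum N Q P X n $$ (i, j) = 0" if "n \<le> d" for n
    using that
  proof (induction n)
    case (Suc n)
    then show ?case
      using i j below[of n] carrier_matD[OF pow_carrier_mat[OF X, of n]]
        carrier_matD[OF resolvent_sum_carrier[OF X, of Q P n]]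
      by simp
  qed (use i j in simp)
  then show ?thesis
    using i j carrier_matD[OF pow_carrier_mat[OF X, of d]]
      carrier_matD[OF resolvent_sum_carrier[OF X, of Q P d]]
    by simp
qed

lemma det_mult_resolvent_sum_index:
  assumes X: "X \<in> carrier_mat N N" and i: "i < N" and j: "j < N"
  shows "det (pencil N Q P X) * resolvent_sum N Q P X n $$ (i, j)
    = Q ^ n * adj_mat (pencil N Q P X) $$ (i, j)
      - (-P) ^ n * (X ^\<^sub>m n * adj_mat (pencil N Q P X)) $$ (i, j)"
proof -
  let ?K = "pencil N Q P X" and ?S = "resolvent_sum N Q P X n" and ?Xn = "X ^\<^sub>m n"
  let ?adj = "adj_mat ?K"
  have K: "?K \<in> carrier_mat N N" and S: "?S \<in> carrier_mat N N" and Xn: "?Xn \<in> carrier_mat N N"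
    using X by (simp_all add: pow_carrier_mat)
  have adj: "?adj \<in> carrier_mat N N" using adj_mat(1)[OF K] .
  have "det ?K \<cdot>\<^sub>m ?S = ?S * (?K * ?adj)"
    using S by (simp add: adj_mat(2)[OF K] mult_smult_distrib[OF S one_carrier_mat])
  also have "\<dots> = (?S * ?K) * ?adj" using S K adj by simp
  also have "\<dots> = Q ^ n \<cdot>\<^sub>m ?adj - (-P) ^ n \<cdot>\<^sub>m (?Xn * ?adj)"
    unfolding resolvent_sum_mult_pencil[OF X] using Xn adj
    by (simp add: minus_mult_distrib_mat[of _ N N] mult_smult_assoc_mat[of _ N N])
  finally have "(det ?K \<cdot>\<^sub>m ?S) $$ (i, j) = (Q ^ n \<cdot>\<^sub>m ?adj - (-P) ^ n \<cdot>\<^sub>m (?Xn * ?adj)) $$ (i, j)"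
    by simp
  then show ?thesis using i j carrier_matD[OF S] carrier_matD[OF Xn] carrier_matD[OF adj] by simp
qed

lemma poly_det_pencil_at_root:
  fixes X :: "'a :: comm_ring_1 poly mat"
  assumes X: "X \<in> carrier_mat N N" and P: "poly P z = 0"
  shows "poly (det (pencil N Q P X)) z = poly Q z ^ N"
proof -
  interpret eval: comm_ring_hom "\<lambda>f. poly f z" by unfold_locales auto
  have "map_mat (\<lambda>f. poly f z) (pencil N Q P X) = poly Q z \<cdot>\<^sub>m 1\<^sub>m N"
    unfolding pencil_def using X P by (intro eq_matI) auto
  from arg_cong[OF this, of det] show ?thesis by simp
qed

lemma adj_pencil_index_factor:
  fixes X :: "'a :: idom poly mat"
  assumes X: "X \<in> carrier_mat N N" and i: "i < N" and j: "j < N"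
    and below: "\<And>k. k < d \<Longrightarrow> (X ^\<^sub>m k) $$ (i, j) = 0"
    and first: "poly ((X ^\<^sub>m d) $$ (i, j)) z \<noteq> 0"
    and P: "poly P z = 0" and Q: "poly Q z \<noteq> 0"
  obtains R where "poly R z \<noteq> 0" and "Q ^ Suc d * adj_mat (pencil N Q P X) $$ (i, j) = (-P) ^ d * R"
proof -
  let ?K = "pencil N Q P X"
  let ?Y = "(X ^\<^sub>m Suc d * adj_mat ?K) $$ (i, j)"
  define R where "R = det ?K * (X ^\<^sub>m d) $$ (i, j) - P * ?Y"
  have "det ?K * ((-P) ^ d * (X ^\<^sub>m d) $$ (i, j))
      = Q ^ Suc d * adj_mat ?K $$ (i, j) - (-P) ^ Suc d * ?Y"
    using det_mult_resolvent_sum_index[OF X i j, of Q P "Suc d"]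
      resolvent_sum_index_first_nonzero[OF X i j below, where Q = Q and P = P] by simp
  then have "Q ^ Suc d * adj_mat ?K $$ (i, j) = (-P) ^ d * R"
    unfolding R_def by (simp add: algebra_simps)
  moreover have "poly R z \<noteq> 0"
    unfolding R_def using poly_det_pencil_at_root[OF X P] first P Q by simp
  ultimately show thesis using that by blast
qed

lemma mat_inv_right_inverse:
  fixes K :: "'a :: field mat"
  assumes K: "K \<in> carrier_mat N N" and det: "det K \<noteq> 0"
  shows "mat_inv K \<in> carrier_mat N N" and "K * mat_inv K = 1\<^sub>m N"
proof -
  define B where "B = inverse (det K) \<cdot>\<^sub>m adj_mat K"
  have adj: "adj_mat K \<in> carrier_mat N N" using adj_mat(1)[OF K] .
  have "K * B = inverse (det K) \<cdot>\<^sub>m (det K \<cdot>\<^sub>m 1\<^sub>m N)"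
    unfolding B_def mult_smult_distrib[OF K adj] adj_mat(2)[OF K] ..
  also have "\<dots> = 1\<^sub>m N" using det by (intro eq_matI) auto
  finally have KB: "K * B = 1\<^sub>m N" .
  have "B * K = inverse (det K) \<cdot>\<^sub>m (det K \<cdot>\<^sub>m 1\<^sub>m N)"
    unfolding B_def mult_smult_assoc_mat[OF adj K] adj_mat(3)[OF K] ..
  also have "\<dots> = 1\<^sub>m N" using det by (intro eq_matI) auto
  finally have BK: "B * K = 1\<^sub>m N" .
  have "B \<in> carrier_mat N N" unfolding B_def using adj by simp
  then have "\<exists>B. inverts_mat K B \<and> inverts_mat B K"
    using KB BK K unfolding inverts_mat_def by (intro exI[of _ B]) auto
  then have inv: "inverts_mat K (mat_inv K) \<and> inverts_mat (mat_inv K) K"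
    unfolding mat_inv_def by (rule someI_ex)
  then show right: "K * mat_inv K = 1\<^sub>m N" using K unfolding inverts_mat_def by auto
  have "dim_row (mat_inv K) = dim_col K"
    using inv unfolding inverts_mat_def by (metis index_mult_mat(3) index_one_mat(3))
  then show "mat_inv K \<in> carrier_mat N N"
    using arg_cong[OF right, of dim_col] K by auto
qed

lemma eq_smult_right_inverse:
  fixes K B Y :: "'a :: comm_semiring_1 mat"
  assumes K: "K \<in> carrier_mat N N" and B: "B \<in> carrier_mat N N" and Y: "Y \<in> carrier_mat N N"
    and KB: "K * B = 1\<^sub>m N" and YK: "Y * K = d \<cdot>\<^sub>m 1\<^sub>m N"
  shows "Y = d \<cdot>\<^sub>m B"
proof -
  have "Y = Y * (K * B)" using KB right_mult_one_mat[OF Y] by simp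
  also have "\<dots> = (Y * K) * B" using Y K B by simp
  also have "\<dots> = d \<cdot>\<^sub>m B" using YK mult_smult_assoc_mat[OF one_carrier_mat B] B by simp
  finally show ?thesis .
qed

definition const_poly_mat :: "real mat \<Rightarrow> complex poly mat" where
  "const_poly_mat L = map_mat (\<lambda>x. [:complex_of_real x:]) L"

lemma const_poly_mat_pow_index:
  assumes "L \<in> carrier_mat N N" and "i < N" and "j < N"
  shows "(const_poly_mat L ^\<^sub>m k) $$ (i, j) = [:complex_of_real ((L ^\<^sub>m k) $$ (i, j)):]"
proof -
  interpret const: comm_ring_hom "\<lambda>x. [:complex_of_real x:]" by unfold_locales auto
  show ?thesis
    unfolding const_poly_mat_def const.mat_hom_pow[OF assms(1), symmetric]
    using assms carrier_matD[OF pow_carrier_mat[OF assms(1), of k]] by simp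
qed

lemma mat_inv_index_cleared:
  fixes K :: "'a :: idom mat" and Kf :: "'a fract mat"
  assumes K: "K \<in> carrier_mat N N" and cleared: "map_mat to_fract K = to_fract Q \<cdot>\<^sub>m Kf"
    and Q: "Q \<noteq> 0" and det: "det K \<noteq> 0" and i: "i < N" and j: "j < N"
  shows "mat_inv Kf \<in> carrier_mat N N"
    and "mat_inv Kf $$ (i, j) = to_fract Q * to_fract (adj_mat K $$ (i, j)) / to_fract (det K)"
proof -
  interpret frac: inj_comm_ring_hom "to_fract :: 'a \<Rightarrow> 'a fract" by unfold_locales auto
  have Kf: "Kf \<in> carrier_mat N N"
    using arg_cong[OF cleared, of dim_row] arg_cong[OF cleared, of dim_col] K by auto
  have "to_fract (det K) = to_fract Q ^ N * det Kf"
    using arg_cong[OF cleared, of det] Kf by simp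
  then have "det Kf \<noteq> 0" using det by auto
  note Kf_inv = mat_inv_right_inverse[OF Kf this]
  then show "mat_inv Kf \<in> carrier_mat N N" by blast
  define B where "B = inverse (to_fract Q) \<cdot>\<^sub>m mat_inv Kf"
  have B: "B \<in> carrier_mat N N" unfolding B_def using Kf_inv(1) by simp
  have "map_mat to_fract K * B = inverse (to_fract Q) \<cdot>\<^sub>m (to_fract Q \<cdot>\<^sub>m (Kf * mat_inv Kf))"
    unfolding cleared B_def using Kf Kf_inv(1)
    by (simp add: mult_smult_distrib[of _ N N] mult_smult_assoc_mat[of _ N N])
  also have "\<dots> = 1\<^sub>m N" using Q Kf_inv(2) by (intro eq_matI) auto
  finally have KB: "map_mat to_fract K * B = 1\<^sub>m N" .
  have adj: "adj_mat K \<in> carrier_mat N N" using adj_mat(1)[OF K] .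
  have "map_mat to_fract (adj_mat K) * map_mat to_fract K = map_mat to_fract (det K \<cdot>\<^sub>m 1\<^sub>m N)"
    unfolding frac.mat_hom_mult[OF adj K, symmetric] adj_mat(3)[OF K] ..
  also have "\<dots> = to_fract (det K) \<cdot>\<^sub>m 1\<^sub>m N" by (intro eq_matI) auto
  finally have adj_frac: "map_mat to_fract (adj_mat K) = to_fract (det K) \<cdot>\<^sub>m B"
    using eq_smult_right_inverse[OF _ B _ KB] K adj by simp
  have "to_fract (adj_mat K $$ (i, j)) = to_fract (det K) * inverse (to_fract Q) * mat_inv Kf $$ (i, j)"
    using arg_cong[OF adj_frac, of "\<lambda>X. X $$ (i, j)"] i j
      carrier_matD[OF adj] carrier_matD[OF Kf_inv(1)]
    unfolding B_def by (simp add: mult.assoc)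
  then show "mat_inv Kf $$ (i, j) = to_fract Q * to_fract (adj_mat K $$ (i, j)) / to_fract (det K)"
    using Q det by (simp add: field_simps)
qed

lemma transfer_fun_eq_Fract:
  fixes N :: nat and A :: "real mat" and a b p q :: "real poly"
  defines "P \<equiv> cpoly (b * q)" and "Q \<equiv> cpoly (a * p)"
    and "K \<equiv> pencil N (cpoly (a * p)) (cpoly (b * q)) (const_poly_mat (laplacian N A))"
  assumes c: "c < N" and ob: "ob < N" and Q: "Q \<noteq> 0" and det: "det K \<noteq> 0"
  shows "transfer_fun N A a b p q c ob = Fraction_Field.Fract (P * adj_mat K $$ (ob, c)) (det K)"
proof -
  let ?L = "laplacian N A"
  define M where "M = Mfun a b p q"
  define Kf where "Kf = 1\<^sub>m N + M \<cdot>\<^sub>m map_mat const_rf ?L"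
  have M: "to_fract Q * M = to_fract P"
    unfolding M_def Mfun_def P_def[symmetric] Q_def[symmetric] Fract_conv_to_fract using Q by simp
  have K: "K \<in> carrier_mat N N" and Kf: "Kf \<in> carrier_mat N N"
    unfolding K_def Kf_def const_poly_mat_def by simp_all
  have cleared: "map_mat to_fract K = to_fract Q \<cdot>\<^sub>m Kf"
  proof (rule eq_matI)
    fix i j assume "i < dim_row (to_fract Q \<cdot>\<^sub>m Kf)" "j < dim_col (to_fract Q \<cdot>\<^sub>m Kf)"
    then have i: "i < N" and j: "j < N" using Kf by auto
    have "const_rf x = to_fract [:complex_of_real x:]" for x
      unfolding const_rf_def to_fract_def ..
    then show "map_mat to_fract K $$ (i, j) = (to_fract Q \<cdot>\<^sub>m Kf) $$ (i, j)"
      unfolding K_def P_def[symmetric] Q_def[symmetric] Kf_def pencil_def const_poly_mat_def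
      using i j by (simp add: algebra_simps del: mult_pCons_right mult_pCons_left flip: M)
  qed (use K Kf in auto)
  note Kf_inv = mat_inv_index_cleared[OF K cleared Q det ob c]
  have "transfer_fun N A a b p q c ob = M * mat_inv Kf $$ (ob, c)"
    unfolding transfer_fun_def Let_def M_def[symmetric] Kf_def[symmetric]
    using Kf_inv(1) ob c by (simp add: mult_smult_distrib[of _ N N])
  also have "\<dots> = to_fract Q * M * to_fract (adj_mat K $$ (ob, c)) / to_fract (det K)"
    unfolding Kf_inv(2) by (simp add: ac_simps)
  finally show ?thesis unfolding M Fract_conv_to_fract by simp
qed

lemma order_power: "(p :: 'a :: idom poly) \<noteq> 0 \<Longrightarrow> order x (p ^ k) = k * order x p"
  by (induction k) (simp_all add: order_mult)

lemma order_cancel_nonroots: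
  fixes f g u v :: "'a :: idom poly"
  assumes eq: "u * f = g * v" and u: "poly u z \<noteq> 0" and v: "poly v z \<noteq> 0" and g: "g \<noteq> 0"
  shows "order z f = order z g"
proof -
  have "u * f \<noteq> 0" using eq v g by auto
  then have "order z u + order z f = order z g + order z v"
    using eq order_mult by metis
  then show ?thesis using order_0I[OF u] order_0I[OF v] by simp
qed

lemma cpoly_eq_0_iff [simp]: "cpoly f = 0 \<longleftrightarrow> f = 0"
  unfolding cpoly_def by (subst map_poly_eq_0_iff) auto

lemma zero_mult_Fract_order:
  assumes "n \<noteq> 0" and "poly d z \<noteq> 0"
  shows "zero_mult (Fraction_Field.Fract n d) z (order z n)"
  unfolding zero_mult_def using assms order_0I[OF assms(2)]
  by (intro exI[of _ n] exI[of _ d]) auto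

theorem corollary1:
  fixes N :: nat and A :: "real mat" and a b p q :: "real poly"
    and c ob :: nat and s0 :: complex and m :: nat
  assumes "weighted_digraph N A"
    and "c < N" and "ob < N"
    and "has_dpath N A c ob"
    and "a \<noteq> 0" and "b \<noteq> 0" and "p \<noteq> 0" and "q \<noteq> 0"
    and "\<forall>z. \<not> (poly (cpoly (b * q)) z = 0 \<and> poly (cpoly (a * p)) z = 0)"
    and "poly (cpoly (b * q)) s0 = 0"
    and "m = order s0 (cpoly (b * q))"
  shows "zero_mult (transfer_fun N A a b p q c ob) s0 (int ((dpath_dist N A c ob + 1) * m))"
proof -
  note G = assms(1) and c = assms(2) and ob = assms(3)
  define P Q d where "P = cpoly (b * q)" and "Q = cpoly (a * p)" and "d = dpath_dist N A c ob"
  define X where "X = const_poly_mat (laplacian N A)"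
  define K where "K = pencil N Q P X"
  have P: "poly P s0 = 0" "P \<noteq> 0" and Q: "poly Q s0 \<noteq> 0" "Q \<noteq> 0" and m: "m = order s0 P"
    using assms(5-11) unfolding P_def Q_def by auto
  have X: "X \<in> carrier_mat N N" unfolding X_def const_poly_mat_def by simp
  have "(X ^\<^sub>m k) $$ (ob, c) = 0" if "k < d" for k
    using laplacian_pow_index_less_dpath_dist[OF G c ob that[unfolded d_def]]
    unfolding X_def const_poly_mat_pow_index[OF laplacian_carrier ob c] by simp
  moreover have "poly ((X ^\<^sub>m d) $$ (ob, c)) s0 \<noteq> 0"
    using laplacian_pow_index_dpath_dist_neq_0[OF G c ob assms(4)]
    unfolding X_def d_def const_poly_mat_pow_index[OF laplacian_carrier ob c] by simp
  ultimately obtain R where R: "poly R s0 \<noteq> 0" "Q ^ Suc d * adj_mat K $$ (ob, c) = (-P) ^ d * R"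
    using adj_pencil_index_factor[OF X ob c _ _ P(1) Q(1)] unfolding K_def by blast
  then have adj: "adj_mat K $$ (ob, c) \<noteq> 0" using P(2) by auto
  have "order s0 (adj_mat K $$ (ob, c)) = d * m"
    using order_cancel_nonroots[OF R(2)] order_power[of "-P"] P(2) Q(1) R(1) m by simp
  then have "order s0 (P * adj_mat K $$ (ob, c)) = (d + 1) * m"
    using order_mult[of P "adj_mat K $$ (ob, c)" s0] P(2) adj m by simp
  moreover have det: "poly (det K) s0 \<noteq> 0"
    using poly_det_pencil_at_root[OF X P(1)] Q(1) unfolding K_def by simp
  moreover have "transfer_fun N A a b p q c ob = Fraction_Field.Fract (P * adj_mat K $$ (ob, c)) (det K)"
  proof -
    have "det K \<noteq> 0" using det by auto
    then show ?thesis
      using transfer_fun_eq_Fract[OF c ob Q(2)[unfolded Q_def]] unfolding K_def X_def P_def Q_def by blast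
  qed
  ultimately show ?thesis
    using zero_mult_Fract_order[OF _ det, of "P * adj_mat K $$ (ob, c)"] P(2) adj
    unfolding d_def by simp
qed

end
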